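(* Let $0<q<1$ and let $\lambda$ be a partition with at most $n$ parts. Writing $x=(x_1,\dots,x_n)=(q^{u_1},\dots,q^{u_n})$, the function $u\mapsto W_\lambda(q^{u_1},\dots,q^{u_n};q,p,t,a,b)$ is elliptic in each variable $u_i$; that is, for each $i$ it is invariant under $u_i\mapsto u_i+2\pi\sqrt{-1}/\log q$ and under $u_i\mapsto u_i+\log p/\log q$ (the latter meaning $x_i\mapsto px_i$).
   Context: Fix $p\in\mathbb{C}$ with $0<|p|<1$; parameters generic. $E(x)=(x;p)_\infty(p/x;p)_\infty$. For integer $m\ge0$, $(a)_m=\prod_{k=0}^{m-1}E(aq^k)$, for $m<0$, $(a)_m=1/(aq^m)_{-m}$; for a partition $\lambda$ with $n$ parts $(a)_\lambda=\prod_{i=1}^n(at^{1-i})_{\lambda_i}$; several arguments denote products; integer subscripts denote the single-integer symbol. For $n$-part partitions with $\lambda_1\ge\mu_1\ge\dots\ge\lambda_n\ge\mu_n$, $\lambda_{n+1}=\mu_{n+1}=0$, $H_{\lambda/\mu}(q,p,t,b)=\prod_{1\le i<j\le n}\Big\{\frac{(q^{\mu_i-\mu_{j-1}}t^{j-i})_{\mu_{j-1}-\lambda_j}(q^{\lambda_i+\lambda_j}t^{3-j-i}b)_{\mu_{j-1}-\lambda_j}}{(q^{\mu_i-\mu_{j-1}+1}t^{j-i-1})_{\mu_{j-1}-\lambda_j}(q^{\lambda_i+\lambda_j+1}t^{2-j-i}b)_{\mu_{j-1}-\lambda_j}}\frac{(q^{\lambda_i-\mu_{j-1}+1}t^{j-i-1})_{\mu_{j-1}-\lambda_j}}{(q^{\lambda_i-\mu_{j-1}}t^{j-i})_{\mu_{j-1}-\lambda_j}}\Big\}\prod_{1\le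 i<j-1\le n}\frac{(q^{\mu_i+\lambda_j+1}t^{1-j-i}b)_{\mu_{j-1}-\lambda_j}}{(q^{\mu_i+\lambda_j}t^{2-j-i}b)_{\mu_{j-1}-\lambda_j}}$; for $x\in\mathbb{C}$, $W_{\lambda/\mu}(x;q,p,t,a,b)=H_{\lambda/\mu}\frac{(x^{-1},ax)_\lambda(qbx/t,qb/(axt))_\mu}{(x^{-1},ax)_\mu(qbx,qb/(ax))_\lambda}\prod_{i=1}^n\frac{E(bt^{1-2i}q^{2\mu_i})}{E(bt^{1-2i})}\frac{(bt^{1-2i})_{\mu_i+\lambda_{i+1}}}{(bqt^{-2i})_{\mu_i+\lambda_{i+1}}}t^{i(\mu_i-\lambda_{i+1})}$ (zero if the interlacing fails); recursively $W_{\lambda/\mu}(y,z_1,\dots,z_\ell;q,p,t,a,b)=\sum_\nu W_{\lambda/\nu}(yt^{-\ell};q,p,t,at^{2\ell},bt^\ell)W_{\nu/\mu}(z_1,\dots,z_\ell;q,p,t,a,b)$ over $\nu$ with $\lambda_1\ge\nu_1\ge\dots\ge\lambda_n\ge\nu_n\ge0$; $W_\lambda=W_{\lambda/0}$. *)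

theory Defs
  imports "HOL-Analysis.Analysis"
begin

definition qinf :: "complex \<Rightarrow> complex \<Rightarrow> complex" where
  "qinf p x = prodinf (\<lambda>k. 1 - x * p ^ k)"

definition Eth :: "complex \<Rightarrow> complex \<Rightarrow> complex" where
  "Eth p x = qinf p x * qinf p (p / x)"

definition ep :: "complex \<Rightarrow> complex \<Rightarrow> complex \<Rightarrow> int \<Rightarrow> complex" where
  "ep p q a m = (if 0 \<le> m then (\<Prod>k<nat m. Eth p (a * q ^ k))
      else 1 / (\<Prod>k<nat (- m). Eth p (a * q powi m * q ^ k)))"

text \<open>Partitions with at most n parts are lists of length n (padded by zeros);
  part lam i is the i-th part (1-based), and 0 for i outside 1..n.\<close>
definition part :: "nat list \<Rightarrow> nat \<Rightarrow> int" where
  "part lam i = (if 1 \<le> i \<and> i \<le> length lam then int (lam ! (i - 1)) else 0)"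

definition is_partition :: "nat list \<Rightarrow> bool" where
  "is_partition lam = sorted_wrt (\<ge>) lam"

definition epl :: "complex \<Rightarrow> complex \<Rightarrow> complex \<Rightarrow> complex \<Rightarrow> nat list \<Rightarrow> complex" where
  "epl p q t a lam = (\<Prod>i\<in>{1..length lam}. ep p q (a * t powi (1 - int i)) (part lam i))"

definition interlace :: "nat list \<Rightarrow> nat list \<Rightarrow> bool" where
  "interlace lam mu \<longleftrightarrow> length mu = length lam \<and>
     (\<forall>i\<in>{1..length lam}. part mu i \<le> part lam i \<and> part lam (i + 1) \<le> part mu i)"

definition Hfac :: "complex \<Rightarrow> complex \<Rightarrow> complex \<Rightarrow> complex \<Rightarrow> nat list \<Rightarrow> nat list \<Rightarrow> complex" where
  "Hfac p q t b lam mu =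
    (let n = length lam; L = part lam; M = part mu; Q = (\<lambda>k. q powi k); T = (\<lambda>k. t powi k);
         d = (\<lambda>j. M (j - 1) - L j) in
     (\<Prod>j\<in>{1..n}. \<Prod>i\<in>{1..<j}. let ii = int i; jj = int j in
        (ep p q (Q (M i - M (j - 1)) * T (jj - ii)) (d j)
         * ep p q (Q (L i + L j) * T (3 - jj - ii) * b) (d j))
        / (ep p q (Q (M i - M (j - 1) + 1) * T (jj - ii - 1)) (d j)
         * ep p q (Q (L i + L j + 1) * T (2 - jj - ii) * b) (d j))
        * (ep p q (Q (L i - M (j - 1) + 1) * T (jj - ii - 1)) (d j)
           / ep p q (Q (L i - M (j - 1)) * T (jj - ii)) (d j)))
     * (\<Prod>i\<in>{1..n}. \<Prod>j\<in>{i + 2..n + 1}. let ii = int i; jj = int j in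
        ep p q (Q (M i + L j + 1) * T (1 - jj - ii) * b) (d j)
        / ep p q (Q (M i + L j) * T (2 - jj - ii) * b) (d j)))"

definition W1 :: "complex \<Rightarrow> complex \<Rightarrow> complex \<Rightarrow> complex \<Rightarrow> complex \<Rightarrow> nat list \<Rightarrow> nat list \<Rightarrow> complex \<Rightarrow> complex" where
  "W1 p q t a b lam mu x =
    (if interlace lam mu then
      (let n = length lam; L = part lam; M = part mu in
       Hfac p q t b lam mu
       * (epl p q t (1 / x) lam * epl p q t (a * x) lam
          * epl p q t (q * b * x / t) mu * epl p q t (q * b / (a * x * t)) mu)
       / (epl p q t (1 / x) mu * epl p q t (a * x) mu
          * epl p q t (q * b * x) lam * epl p q t (q * b / (a * x)) lam)
       * (\<Prod>i\<in>{1..n}.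
            Eth p (b * t powi (1 - 2 * int i) * q powi (2 * M i)) / Eth p (b * t powi (1 - 2 * int i))
            * (ep p q (b * t powi (1 - 2 * int i)) (M i + L (i + 1))
               / ep p q (b * q * t powi (- 2 * int i)) (M i + L (i + 1)))
            * t powi (int i * (M i - L (i + 1)))))
     else 0)"

fun Wskew :: "complex \<Rightarrow> complex \<Rightarrow> complex \<Rightarrow> complex \<Rightarrow> complex \<Rightarrow> nat list \<Rightarrow> nat list \<Rightarrow> complex list \<Rightarrow> complex" where
  "Wskew p q t a b lam mu [] = (if lam = mu then 1 else 0)"
| "Wskew p q t a b lam mu (y # zs) =
     (\<Sum>nu\<in>{nu. interlace lam nu}.
        W1 p q t (a * t powi (2 * int (length zs))) (b * t powi (int (length zs))) lam nu
           (y * t powi (- int (length zs)))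
        * Wskew p q t a b nu mu zs)"

definition Wpart :: "complex \<Rightarrow> complex \<Rightarrow> complex \<Rightarrow> complex \<Rightarrow> complex \<Rightarrow> nat list \<Rightarrow> complex list \<Rightarrow> complex" where
  "Wpart p q t a b lam xs = Wskew p q t a b lam (replicate (length lam) 0) xs"

end

theory Submission
  imports Defs
begin

text \<open>The shift of \<open>u\<^sub>i\<close> by \<open>2\<pi>i/log q\<close> leaves \<open>x\<^sub>i = q\<^bsup>u\<^sub>i\<^esup>\<close> unchanged, while the shift by
  \<open>log p/log q\<close> replaces \<open>x\<^sub>i\<close> by \<open>p x\<^sub>i\<close>. By the branching rule each variable enters only as the
  argument \<open>x\<close> of a one-variable factor \<open>W\<^bsub>\<lambda>/\<mu>\<^esub>(x)\<close>, and there only through products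
  \<open>E(c/x) E(acx)\<close>, with \<open>c\<close> one of \<open>1\<close>, \<open>qb/(at)\<close>, \<open>qb/a\<close> times powers of \<open>q\<close> and \<open>t\<close>. As
  \<open>E(px) = -E(x)/x\<close>, each such product picks up the same factor \<open>1/(apx\<^sup>2)\<close> under \<open>x \<mapsto> px\<close>,
  and numerator and denominator of \<open>W\<^bsub>\<lambda>/\<mu>\<^esub>(x)\<close> both contain \<open>|\<lambda>| + |\<mu>|\<close> of them.\<close>

lemma convergent_prod_qinf: "cmod p < 1 \<Longrightarrow> convergent_prod (\<lambda>k. 1 - x * p ^ k)"
proof -
  assume "cmod p < 1"
  then have "summable (\<lambda>k. norm ((1 - x * p ^ k) - 1))"
    by (simp add: norm_mult norm_power summable_mult summable_geometric)
  then show ?thesis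
    by (intro abs_convergent_prod_imp_convergent_prod summable_imp_abs_convergent_prod)
qed

lemma qinf_unfold: "cmod p < 1 \<Longrightarrow> qinf p x = (1 - x) * qinf p (p * x)"
proof -
  assume "cmod p < 1"
  then have "(\<lambda>k. 1 - x * p ^ k) has_prod ((\<Prod>k<1. 1 - x * p ^ k) * (\<Prod>k. 1 - x * p ^ (k + 1)))"
    by (intro has_prod_ignore_initial_segment' convergent_prod_qinf)
  moreover have "(\<lambda>k. 1 - x * p ^ (k + 1)) = (\<lambda>k. 1 - (p * x) * p ^ k)"
    by (simp add: fun_eq_iff algebra_simps)
  ultimately show ?thesis
    unfolding qinf_def using has_prod_unique by fastforce
qed

lemma Eth_mult_p:
  assumes "cmod p < 1" "p \<noteq> 0" "x \<noteq> 0"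
  shows "Eth p (p * x) = - Eth p x / x"
proof -
  have "Eth p (p * x) = qinf p (p * x) * ((1 - 1 / x) * qinf p (p / x))"
    using assms qinf_unfold[OF assms(1), of "1 / x"] by (simp add: Eth_def)
  also have "\<dots> = - ((1 - x) * qinf p (p * x) * qinf p (p / x)) / x"
    using assms(3) by (simp add: field_simps)
  also have "\<dots> = - Eth p x / x"
    by (simp add: Eth_def qinf_unfold[OF assms(1), of x])
  finally show ?thesis .
qed

lemma Eth_pair_mult_p:
  assumes "cmod p < 1" "p \<noteq> 0" "x \<noteq> 0" "a \<noteq> 0" "c \<noteq> 0"
  shows "Eth p (c / (p * x)) * Eth p (a * c * (p * x))
       = 1 / (a * p * x^2) * (Eth p (c / x) * Eth p (a * c * x))"
proof -
  have "Eth p (c / x) = - Eth p (c / (p * x)) / (c / (p * x))"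
    using Eth_mult_p[OF assms(1,2), of "c / (p * x)"] assms by simp
  then have inner: "Eth p (c / (p * x)) = - c / (p * x) * Eth p (c / x)"
    using assms by (simp add: field_simps)
  have outer: "Eth p (a * c * (p * x)) = - Eth p (a * c * x) / (a * c * x)"
    using Eth_mult_p[OF assms(1,2), of "a * c * x"] assms by (simp add: ac_simps)
  show ?thesis
    unfolding inner outer using assms by (simp add: field_simps power2_eq_square)
qed

lemma ep_pair_mult_p:
  assumes "cmod p < 1" "p \<noteq> 0" "x \<noteq> 0" "a \<noteq> 0" "c \<noteq> 0" "q \<noteq> 0"
  shows "ep p q (c / (p * x)) (int m) * ep p q (a * c * (p * x)) (int m)
       = (1 / (a * p * x^2)) ^ m * (ep p q (c / x) (int m) * ep p q (a * c * x) (int m))"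
proof -
  have factor: "Eth p (c / (p * x) * q ^ k) * Eth p (a * c * (p * x) * q ^ k)
      = 1 / (a * p * x^2) * (Eth p (c / x * q ^ k) * Eth p (a * c * x * q ^ k))" for k
    using Eth_pair_mult_p[OF assms(1-4), of "c * q ^ k"] assms by (simp add: ac_simps)
  have "ep p q (c / (p * x)) (int m) * ep p q (a * c * (p * x)) (int m)
      = (\<Prod>k<m. Eth p (c / (p * x) * q ^ k) * Eth p (a * c * (p * x) * q ^ k))"
    by (simp only: ep_def prod.distrib nat_int of_nat_0_le_iff if_True)
  also have "\<dots> = (\<Prod>k<m. 1 / (a * p * x^2) * (Eth p (c / x * q ^ k) * Eth p (a * c * x * q ^ k)))"
    by (simp only: factor)
  also have "\<dots> = (1 / (a * p * x^2)) ^ m * (ep p q (c / x) (int m) * ep p q (a * c * x) (int m))"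
    by (simp only: ep_def prod.distrib prod_constant card_lessThan nat_int of_nat_0_le_iff if_True)
  finally show ?thesis .
qed

lemma sum_part_eq_sum_list: "(\<Sum>i\<in>{1..length l}. nat (part l i)) = sum_list l"
proof -
  have "(\<Sum>i\<in>{1..length l}. nat (part l i)) = (\<Sum>i\<in>{1..length l}. l ! (i - 1))"
    by (rule sum.cong) (auto simp: part_def)
  also have "\<dots> = (\<Sum>i<length l. l ! i)"
    by (rule sum.reindex_bij_witness[where i = Suc and j = "\<lambda>i. i - 1"]) auto
  also have "\<dots> = sum_list l"
    by (simp add: sum_list_sum_nth atLeast0LessThan)
  finally show ?thesis .
qed

lemma epl_pair_mult_p:
  assumes "cmod p < 1" "p \<noteq> 0" "x \<noteq> 0" "a \<noteq> 0" "c \<noteq> 0" "q \<noteq> 0" "t \<noteq> 0"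
  shows "epl p q t (c / (p * x)) l * epl p q t (a * c * (p * x)) l
       = (1 / (a * p * x^2)) ^ sum_list l * (epl p q t (c / x) l * epl p q t (a * c * x) l)"
proof -
  have factor: "ep p q (c / (p * x) * T) (part l i) * ep p q (a * c * (p * x) * T) (part l i)
      = (1 / (a * p * x^2)) ^ nat (part l i)
        * (ep p q (c / x * T) (part l i) * ep p q (a * c * x * T) (part l i))"
    if "T \<noteq> 0" for T i
  proof -
    have "0 \<le> part l i"
      by (simp add: part_def)
    then obtain m where m: "part l i = int m"
      using nonneg_int_cases by blast
    have args: "c / (p * x) * T = c * T / (p * x)" "a * c * (p * x) * T = a * (c * T) * (p * x)"
      "c / x * T = c * T / x" "a * c * x * T = a * (c * T) * x"
      by simp_all
    show ?thesis
      unfolding m nat_int args using assms that by (intro ep_pair_mult_p) simp_all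
  qed
  let ?T = "\<lambda>i. t powi (1 - int i)"
  have "epl p q t (c / (p * x)) l * epl p q t (a * c * (p * x)) l
      = (\<Prod>i\<in>{1..length l}. ep p q (c / (p * x) * ?T i) (part l i) * ep p q (a * c * (p * x) * ?T i) (part l i))"
    by (simp only: epl_def prod.distrib)
  also have "\<dots> = (\<Prod>i\<in>{1..length l}. (1 / (a * p * x^2)) ^ nat (part l i)
        * (ep p q (c / x * ?T i) (part l i) * ep p q (a * c * x * ?T i) (part l i)))"
    using assms(7) by (intro prod.cong refl factor) simp
  also have "\<dots> = (1 / (a * p * x^2)) ^ sum_list l * (epl p q t (c / x) l * epl p q t (a * c * x) l)"
    by (simp only: epl_def prod.distrib power_sum[symmetric] sum_part_eq_sum_list)
  finally show ?thesis .
qed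

lemma W1_mult_p:
  assumes "cmod p < 1" "p \<noteq> 0" "x \<noteq> 0" "a \<noteq> 0" "b \<noteq> 0" "t \<noteq> 0" "q \<noteq> 0"
  shows "W1 p q t a b lam mu (p * x) = W1 p q t a b lam mu x"
proof -
  define K where "K = 1 / (a * p * x^2)"
  define N where "N y = epl p q t (1 / y) lam * epl p q t (a * y) lam
      * epl p q t (q * b * y / t) mu * epl p q t (q * b / (a * y * t)) mu" for y
  define D where "D y = epl p q t (1 / y) mu * epl p q t (a * y) mu
      * epl p q t (q * b * y) lam * epl p q t (q * b / (a * y)) lam" for y
  have pair_1: "epl p q t (1 / (p * x)) l * epl p q t (a * (p * x)) l
      = K ^ sum_list l * (epl p q t (1 / x) l * epl p q t (a * x) l)" for l
    using epl_pair_mult_p[OF assms(1-4), of 1] assms unfolding K_def by simp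
  have pair_t: "epl p q t (q * b / (a * (p * x) * t)) l * epl p q t (q * b * (p * x) / t) l
      = K ^ sum_list l * (epl p q t (q * b / (a * x * t)) l * epl p q t (q * b * x / t) l)" for l
  proof -
    have "q * b / (a * y * t) = q * b / (a * t) / y" "q * b * y / t = a * (q * b / (a * t)) * y" for y
      using assms by (simp_all add: field_simps)
    then show ?thesis
      unfolding K_def using assms by (simp only:) (intro epl_pair_mult_p, simp_all)
  qed
  have pair_b: "epl p q t (q * b / (a * (p * x))) l * epl p q t (q * b * (p * x)) l
      = K ^ sum_list l * (epl p q t (q * b / (a * x)) l * epl p q t (q * b * x) l)" for l
  proof -
    have "q * b / (a * y) = q * b / a / y" "q * b * y = a * (q * b / a) * y" for y
      using assms by (simp_all add: field_simps)
    then show ?thesis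
      unfolding K_def using assms by (simp only:) (intro epl_pair_mult_p, simp_all)
  qed
  have N_split: "N y = (epl p q t (1 / y) lam * epl p q t (a * y) lam)
      * (epl p q t (q * b / (a * y * t)) mu * epl p q t (q * b * y / t) mu)" for y
    unfolding N_def by (simp only: ac_simps)
  have N: "N (p * x) = K ^ (sum_list lam + sum_list mu) * N x"
    unfolding N_split pair_1 pair_t power_add by (simp only: ac_simps)
  have D_split: "D y = (epl p q t (1 / y) mu * epl p q t (a * y) mu)
      * (epl p q t (q * b / (a * y)) lam * epl p q t (q * b * y) lam)" for y
    unfolding D_def by (simp only: ac_simps)
  have D: "D (p * x) = K ^ (sum_list lam + sum_list mu) * D x"
    unfolding D_split pair_1 pair_b power_add by (simp only: ac_simps)
  have "K \<noteq> 0"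
    using assms unfolding K_def by simp
  then have "N (p * x) / D (p * x) = N x / D x"
    unfolding N D by simp
  then show ?thesis
    unfolding W1_def Let_def N_def D_def by (simp only: times_divide_eq_right[symmetric])
qed

lemma Wskew_list_update_mult_p:
  assumes "cmod p < 1" "p \<noteq> 0" "a \<noteq> 0" "b \<noteq> 0" "t \<noteq> 0" "q \<noteq> 0"
    and "i < length xs" "xs ! i \<noteq> 0"
  shows "Wskew p q t a b lam mu (xs[i := p * xs ! i]) = Wskew p q t a b lam mu xs"
  using assms(7,8)
proof (induction xs arbitrary: i lam)
  case Nil
  then show ?case by simp
next
  case (Cons y zs)
  show ?case
  proof (cases i)
    case 0
    let ?n = "int (length zs)"
    have "W1 p q t (a * t powi (2 * ?n)) (b * t powi ?n) lam nu (p * (y * t powi (- ?n)))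
        = W1 p q t (a * t powi (2 * ?n)) (b * t powi ?n) lam nu (y * t powi (- ?n))" for nu
      using Cons.prems 0 assms by (intro W1_mult_p) simp_all
    then show ?thesis
      using 0 by (simp add: mult.assoc)
  next
    case (Suc j)
    then show ?thesis
      using Cons.prems Cons.IH[of j] by simp
  qed
qed

lemma powr_add_divide_ln:
  fixes q :: real and z w :: complex
  assumes "0 < q" "q \<noteq> 1"
  shows "of_real q powr (z + w / of_real (ln q)) = exp w * of_real q powr z"
proof -
  have "ln q \<noteq> 0" using assms by simp
  then have "(z + w / of_real (ln q)) * of_real (ln q) = w + z * of_real (ln q)"
    by (simp add: field_simps)
  then show ?thesis
    using assms by (simp add: powr_def Ln_of_real exp_add)
qed

theorem mainTheorem11:
  fixes q :: real and p t a b :: complex and n :: nat and lam :: "nat list"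
    and u :: "nat \<Rightarrow> complex" and i :: nat
  assumes "0 < q" "q < 1" "0 < cmod p" "cmod p < 1"
    and "t \<noteq> 0" "a \<noteq> 0" "b \<noteq> 0"
    and "is_partition lam" "length lam = n" "i < n"
  defines "f \<equiv> (\<lambda>v :: nat \<Rightarrow> complex.
             Wpart p (of_real q) t a b lam (map (\<lambda>k. (of_real q) powr (v k)) [0..<n]))"
  shows "f (u(i := u i + 2 * pi * \<i> / of_real (ln q))) = f u \<and>
         f (u(i := u i + Ln p / of_real (ln q))) = f u"
proof
  have "exp (2 * pi * \<i>) = 1"
    by simp
  then have "map (\<lambda>k. of_real q powr ((u(i := u i + 2 * pi * \<i> / of_real (ln q))) k)) [0..<n]
      = map (\<lambda>k. of_real q powr (u k)) [0..<n]"
    using powr_add_divide_ln[of q] assms(1,2) by (intro map_cong) auto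
  then show "f (u(i := u i + 2 * pi * \<i> / of_real (ln q))) = f u"
    unfolding f_def by (simp only:)
next
  let ?xs = "map (\<lambda>k. of_real q powr (u k)) [0..<n]"
  have "p \<noteq> 0"
    using assms(3) by auto
  then have "map (\<lambda>k. of_real q powr ((u(i := u i + Ln p / of_real (ln q))) k)) [0..<n]
      = ?xs[i := p * ?xs ! i]"
    using powr_add_divide_ln[of q] assms(1,2,10) by (intro nth_equalityI) (auto simp: nth_list_update)
  moreover have "Wskew p q t a b lam mu (?xs[i := p * ?xs ! i]) = Wskew p q t a b lam mu ?xs" for mu
    using assms \<open>p \<noteq> 0\<close> by (intro Wskew_list_update_mult_p) auto
  ultimately show "f (u(i := u i + Ln p / of_real (ln q))) = f u"
    unfolding f_def Wpart_def by simp
qed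

end
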